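(* In $\mathbf H^{\mathrm{gr}}_N[c_1,\dots,c_{l-1}]$, for each $i=1,\dots,N$, $$\prod_{k=1}^{l}\Big(w_i-\hbar-z_k+\mathbf t\sum_{j>i}s_{ij}\Big)=\sum_{p=0}^{l}\mathbf t^p\sum_{0=k_0<k_1<\dots<k_p\le l}\ \sum_{i=i_0<i_1<\dots<i_p\le N}\ \prod_{r=0}^{p}\ \prod_{k=k_r+1}^{k_{r+1}-1}(w_{i_r}-\hbar-z_k)\cdot s_{i_{p-1},i_p}s_{i_{p-2},i_{p-1}}\cdots s_{i_1,i_2}s_{i_0,i_1},$$ where on the left the factors are multiplied in the order $k=1,\dots,l$ from left to right, on the right $k_{p+1}:=l+1$, and for $p=0$ the product of transpositions is $1$.
   Context: $\mathbf H^{\mathrm{gr}}_N$ is the $\mathbb C[\hbar,\mathbf t]$-algebra generated by $s_1,\dots,s_{N-1}$, $X_1^{\pm1},\dots,X_N^{\pm1}$, $w_1,\dots,w_N$ with relations: the $w_i$ commute pairwise, the $X_i$ commute pairwise, $X_iX_i^{-1}=X_i^{-1}X_i=1$; the $s_i$ satisfy the Coxeter relations of $\mathfrak S_N$ ($s_{ij}$ denotes the transposition $(ij)$); $s_iw_i=w_{i+1}s_i-\mathbf t$, $s_iw_{i+1}=w_is_i+\mathbf t$, $s_iw_j=w_js_i$ ($j\ne i,i+1$); $\sigma X_i^{\pm1}=X_{\sigma(i)}^{\pm1}\sigma$; $[w_i,X_j]=-\mathbf tX_js_{ji}$ ($i>j$), $-\mathbf tX_is_{ij}$ ($i<j$), $[w_i,X_i]=-\hbar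 X_i+\mathbf t\sum_{k<i}X_ks_{ki}+\mathbf t\sum_{k>i}X_is_{ik}$. $\mathbf H^{\mathrm{gr}}_N[c_1,\dots,c_{l-1}]$ is its extension of scalars by indeterminates $c_1,\dots,c_{l-1}$. Here $l\ge1$, $\varepsilon$ is a primitive $l$-th root of unity, and $z_k=-l^{-1}\big((l-k)\hbar+\sum_{m=1}^{l-1}(1+\varepsilon^m+\dots+\varepsilon^{(k-1)m})c_m\big)$ for $k=1,\dots,l$. *)

theory Defs
  imports Complex_Main "HOL-Combinatorics.Transposition" "HOL-Combinatorics.Permutations"
begin

text \<open>An algebra over C[hbar,t,c_1..c_(l-1)] is modelled as a ring A of type 'a
 together with a ring homomorphism emb from the complex numbers into the centre of A
 and central elements hb, tt, c m.\<close>

definition zk :: "(complex \<Rightarrow> 'a::ring_1) \<Rightarrow> 'a \<Rightarrow> (nat \<Rightarrow> 'a) \<Rightarrow> complex \<Rightarrow> nat \<Rightarrow> nat \<Rightarrow> 'a" where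
  "zk emb hb c eps l k =
     - (emb (1 / of_nat l) *
        (of_nat (l - k) * hb + (\<Sum>m = 1..<l. emb (\<Sum>q<k. eps ^ (q * m)) * c m)))"

definition kseqs :: "nat \<Rightarrow> nat \<Rightarrow> nat list set" where
  "kseqs l p = {ks. length ks = p \<and> sorted_wrt (<) (0 # ks) \<and> set ks \<subseteq> {1..l}}"

definition iseqs :: "nat \<Rightarrow> nat \<Rightarrow> nat \<Rightarrow> nat list set" where
  "iseqs N i p = {js. length js = p \<and> sorted_wrt (<) (i # js) \<and> set js \<subseteq> {1..N}}"

end

theory Submission
  imports Defs
begin

text \<open>Put u_i = w_i + t \<Sum>_{j>i} s_{ij}. The heart of the matter is s_{ij} u_i = u_j s_{ij} for i < j:
  u_i = y_i + t \<Sum>_{m\<noteq>i} s_{im} with the Jucys--Murphy corrected elements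
  y_i = w_i - t \<Sum>_{k<i} s_{ki}, and both summands are merely permuted by conjugation with S_N.
  As hbar and the z_k are central, F_i(k0) = \<Prod>_{k>k0} (u_i - hbar - z_k) then satisfies
  F_i(k0) = (w_i - hbar - z_{k0+1}) F_i(k0+1) + t \<Sum>_{j>i} F_j(k0+1) s_{ij} with F_i(l) = 1,
  and unfolding this recursion produces the right-hand side, each transposition s_{i_r i_{r+1}}
  recording a step where the t-term was chosen. Neither the values of the z_k nor the relations
  involving the X_a are needed.\<close>

definition central :: "'a::ring_1 \<Rightarrow> bool" where
  "central a \<longleftrightarrow> (\<forall>x. a * x = x * a)"

lemma centralD: "central a \<Longrightarrow> a * x = x * a"
  by (simp add: central_def)

lemma central_left_commute: "central a \<Longrightarrow> x * (a * y) = a * (x * y)"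
  by (metis centralD mult.assoc)

lemma central_of_nat: "central (of_nat n)"
  by (simp add: central_def mult_of_nat_commute)

lemma central_add: "central a \<Longrightarrow> central b \<Longrightarrow> central (a + b)"
  by (simp add: central_def distrib_left distrib_right)

lemma central_minus: "central a \<Longrightarrow> central (- a)"
  by (simp add: central_def)

lemma central_mult:
  assumes "central a" "central b"
  shows "central (a * b)"
  unfolding central_def
proof
  fix x
  have "a * b * x = a * (x * b)"
    by (simp only: mult.assoc centralD[OF assms(2), of x])
  also have "\<dots> = x * (a * b)"
    by (simp only: mult.assoc[symmetric] centralD[OF assms(1), of x])
  finally show "a * b * x = x * (a * b)" .
qed

lemma central_power: "central a \<Longrightarrow> central (a ^ n)"
proof (induction n)
  case 0
  show ?case by (simp add: central_def)
next
  case (Suc n)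
  then show ?case by (simp add: central_mult)
qed

lemma central_sum: "(\<And>x. x \<in> A \<Longrightarrow> central (f x)) \<Longrightarrow> central (\<Sum>x\<in>A. f x)"
  unfolding central_def sum_distrib_left sum_distrib_right
  by (blast intro: sum.cong centralD)

lemma prod_list_map_intertwine:
  fixes s :: "'a::monoid_mult"
  assumes "\<And>x. x \<in> set xs \<Longrightarrow> s * f x = g x * s"
  shows "s * prod_list (map f xs) = prod_list (map g xs) * s"
  using assms
proof (induction xs)
  case (Cons x xs)
  have "s * prod_list (map f (x # xs)) = (s * f x) * prod_list (map f xs)"
    by (simp add: mult.assoc)
  also have "\<dots> = g x * (s * prod_list (map f xs))"
    by (simp add: Cons.prems mult.assoc)
  also have "\<dots> = prod_list (map g (x # xs)) * s"
    by (simp add: Cons mult.assoc)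
  finally show ?case .
qed simp

locale degenerate_affine_hecke =
  fixes T :: "(nat \<Rightarrow> nat) \<Rightarrow> 'a::ring_1" and w :: "nat \<Rightarrow> 'a" and tt :: 'a and N :: nat
  assumes T_id: "T id = 1"
    and T_comp: "\<And>\<sigma> \<tau>. \<sigma> permutes {1..N} \<Longrightarrow> \<tau> permutes {1..N} \<Longrightarrow> T (\<sigma> \<circ> \<tau>) = T \<sigma> * T \<tau>"
    and sw1: "\<And>a. 1 \<le> a \<Longrightarrow> a < N \<Longrightarrow> T (transpose a (a+1)) * w a = w (a+1) * T (transpose a (a+1)) - tt"
    and sw2: "\<And>a. 1 \<le> a \<Longrightarrow> a < N \<Longrightarrow> T (transpose a (a+1)) * w (a+1) = w a * T (transpose a (a+1)) + tt"
    and sw3: "\<And>a b. 1 \<le> a \<Longrightarrow> a < N \<Longrightarrow> b \<in> {1..N} \<Longrightarrow> b \<noteq> a \<Longrightarrow> b \<noteq> a + 1 \<Longrightarrow>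
                T (transpose a (a+1)) * w b = w b * T (transpose a (a+1))"
    and tt_central: "central tt"
begin

definition s :: "nat \<Rightarrow> nat \<Rightarrow> 'a" where
  "s a b = T (transpose a b)"

definition y :: "nat \<Rightarrow> 'a" where
  "y a = w a - tt * (\<Sum>k = 1..<a. s k a)"

definition transp_sum :: "nat \<Rightarrow> 'a" where
  "transp_sum a = (\<Sum>m\<in>{1..N} - {a}. s a m)"

definition upper_transp_sum :: "nat \<Rightarrow> 'a" where
  "upper_transp_sum a = (\<Sum>m = a+1..N. s a m)"

definition u :: "nat \<Rightarrow> 'a" where
  "u a = w a + tt * upper_transp_sum a"

lemma s_commute: "s a b = s b a"
  by (simp add: s_def transpose_commute)

lemma s_square: "a \<in> {1..N} \<Longrightarrow> b \<in> {1..N} \<Longrightarrow> s a b * s a b = 1"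
  unfolding s_def by (metis T_comp T_id permutes_swap_id transpose_comp_involutory)

lemma s_conj:
  assumes "a \<in> {1..N}" "b \<in> {1..N}" "c \<in> {1..N}" "d \<in> {1..N}"
  shows "s a b * s c d = s (transpose a b c) (transpose a b d) * s a b"
proof -
  have "transpose a b \<circ> transpose c d = transpose (transpose a b c) (transpose a b d) \<circ> transpose a b"
    by (simp add: fun_eq_iff transpose_def)
  moreover have "transpose a b c \<in> {1..N}" "transpose a b d \<in> {1..N}"
    using assms by (auto simp: transpose_def)
  ultimately show ?thesis
    unfolding s_def by (metis T_comp assms permutes_swap_id)
qed

lemma s_adjacent_y:
  assumes a: "1 \<le> a" "a < N" and b: "b \<in> {1..N}"
  shows "s a (a+1) * y b = y (transpose a (a+1) b) * s a (a+1)"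
proof -
  let ?\<sigma> = "transpose a (a+1)"
  have A: "a \<in> {1..N}" "a+1 \<in> {1..N}" using a by auto
  have sw1': "s a (a+1) * w a = w (a+1) * s a (a+1) - tt"
    and sw2': "s a (a+1) * w (a+1) = w a * s a (a+1) + tt"
    using sw1[OF a] sw2[OF a] by (simp_all add: s_def)
  have "s a (a+1) * (\<Sum>k = 1..<b. s k b) = (\<Sum>k = 1..<b. s (?\<sigma> k) (?\<sigma> b) * s a (a+1))"
    unfolding sum_distrib_left by (rule sum.cong[OF refl], rule s_conj) (use A b in auto)
  then have L: "s a (a+1) * y b = s a (a+1) * w b - tt * (\<Sum>k = 1..<b. s (?\<sigma> k) (?\<sigma> b) * s a (a+1))"
    unfolding y_def by (simp add: right_diff_distrib central_left_commute[OF tt_central])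
  consider "b = a" | "b = a+1" | "b \<noteq> a" "b \<noteq> a+1" by blast
  then show ?thesis
  proof cases
    case 1
    have "(\<Sum>k = 1..<b. s (?\<sigma> k) (?\<sigma> b) * s a (a+1)) = (\<Sum>k = 1..<a. s k (a+1) * s a (a+1))"
      using 1 by (intro sum.cong) auto
    moreover have "(\<Sum>k = 1..<a+1. s k (a+1)) * s a (a+1) = (\<Sum>k = 1..<a. s k (a+1) * s a (a+1)) + 1"
      using a s_square[OF A] by (simp add: sum_distrib_right distrib_right)
    ultimately show ?thesis
      using L 1 sw1' unfolding y_def by (simp add: algebra_simps)
  next
    case 2
    have "(\<Sum>k = 1..<b. s (?\<sigma> k) (?\<sigma> b) * s a (a+1)) = (\<Sum>k = 1..<a. s k a * s a (a+1)) + 1"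
      using 2 a s_square[OF A] s_commute[of "a+1" a] by simp
    then show ?thesis
      using L 2 sw2' unfolding y_def by (simp add: algebra_simps sum_distrib_right)
  next
    case 3
    then have \<sigma>b: "?\<sigma> b = b" by simp
    have "(\<Sum>k = 1..<b. s (?\<sigma> k) b * s a (a+1)) = (\<Sum>k = 1..<b. s k b * s a (a+1))"
    proof (cases "b \<le> a")
      case True
      then show ?thesis by (intro sum.cong) auto
    next
      case False
      then have "?\<sigma> permutes {1..<b}" using 3 a by (intro permutes_swap_id) auto
      then show ?thesis by (subst sum.permute[of ?\<sigma>]) (auto simp: o_def)
    qed
    then show ?thesis
      using L \<sigma>b sw3[OF a b 3] unfolding y_def by (simp add: algebra_simps sum_distrib_right s_def)
  qed
qed

lemma s_y:
  assumes "1 \<le> i" "i < j" "j \<le> N"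
  shows "s i j * y i = y j * s i j"
proof -
  have "i + 1 \<le> j" using assms(2) by simp
  then show ?thesis
    using assms(3)
  proof (induction j rule: dec_induct)
    case base
    then show ?case using assms(1) s_adjacent_y[of i i] by simp
  next
    case (step n)
    have IH: "s i n * y i = y n * s i n"
      using step by simp
    have "transpose i (n+1) = transpose n (n+1) \<circ> transpose i n \<circ> transpose n (n+1)"
      using step.hyps by (simp add: fun_eq_iff transpose_def)
    moreover have "transpose n (n+1) permutes {1..N}" "transpose i n permutes {1..N}"
      using step assms(1) by (auto intro!: permutes_swap_id)
    ultimately have s_conj_adjacent: "s i (n+1) = s n (n+1) * s i n * s n (n+1)"
      unfolding s_def by (simp add: T_comp permutes_compose)
    have yi: "s n (n+1) * y i = y i * s n (n+1)"
      using s_adjacent_y[of n i] step assms by simp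
    have yn: "s n (n+1) * y n = y (n+1) * s n (n+1)"
      using s_adjacent_y[of n n] step assms by simp
    have "s i (n+1) * y i = s n (n+1) * (s i n * y i) * s n (n+1)"
      by (simp only: s_conj_adjacent mult.assoc yi)
    also have "\<dots> = (s n (n+1) * y n) * s i n * s n (n+1)"
      by (simp only: IH mult.assoc)
    also have "\<dots> = y (n+1) * s i (n+1)"
      by (simp only: yn s_conj_adjacent mult.assoc)
    finally show ?case by (simp only: Suc_eq_plus1)
  qed
qed

lemma s_transp_sum:
  assumes "i \<in> {1..N}" "j \<in> {1..N}"
  shows "s i j * transp_sum i = transp_sum j * s i j"
proof -
  let ?\<sigma> = "transpose i j"
  have "s i j * transp_sum i = (\<Sum>m\<in>{1..N} - {i}. s j (?\<sigma> m) * s i j)"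
    unfolding transp_sum_def sum_distrib_left
    by (rule sum.cong[OF refl]) (use assms in \<open>auto simp: s_conj\<close>)
  also have "\<dots> = (\<Sum>m\<in>{1..N} - {j}. s j m * s i j)"
  proof (rule sum.reindex_bij_betw)
    show "bij_betw ?\<sigma> ({1..N} - {i}) ({1..N} - {j})"
      using assms by (intro bij_betw_imageI) (auto simp: transpose_def image_iff)
  qed
  also have "\<dots> = transp_sum j * s i j"
    unfolding transp_sum_def by (simp add: sum_distrib_right)
  finally show ?thesis .
qed

lemma u_eq_y_transp_sum:
  assumes "a \<in> {1..N}"
  shows "u a = y a + tt * transp_sum a"
proof -
  have split: "{1..N} - {a} = {1..<a} \<union> {a+1..N}" using assms by auto
  have "transp_sum a = (\<Sum>m = 1..<a. s a m) + upper_transp_sum a"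
    unfolding transp_sum_def upper_transp_sum_def split by (rule sum.union_disjoint) auto
  then have "transp_sum a = (\<Sum>m = 1..<a. s m a) + upper_transp_sum a"
    by (simp add: s_commute[of a])
  then show ?thesis
    unfolding u_def y_def by (simp add: algebra_simps)
qed

lemma s_u:
  assumes "i \<in> {1..N}" "j \<in> {1..N}" "i < j"
  shows "s i j * u i = u j * s i j"
  using assms s_y[of i j] s_transp_sum[of i j]
  by (simp add: u_eq_y_transp_sum distrib_left distrib_right mult.assoc
      central_left_commute[OF tt_central])

lemma s_u_minus_central:
  assumes "central b" "i \<in> {1..N}" "j \<in> {1..N}" "i < j"
  shows "s i j * (u i - b) = (u j - b) * s i j"
  using s_u[OF assms(2-4)] centralD[OF assms(1)]
  by (simp add: right_diff_distrib left_diff_distrib)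

lemma prod_u_minus_Cons:
  assumes "i \<in> {1..N}" and b: "\<And>k. central (b k)"
  shows "prod_list (map (\<lambda>k. u i - b k) (k # ks))
    = (w i - b k) * prod_list (map (\<lambda>k. u i - b k) ks)
      + tt * (\<Sum>j = i+1..N. prod_list (map (\<lambda>k. u j - b k) ks) * s i j)"
proof -
  have "upper_transp_sum i * prod_list (map (\<lambda>k. u i - b k) ks)
      = (\<Sum>j = i+1..N. prod_list (map (\<lambda>k. u j - b k) ks) * s i j)"
    unfolding upper_transp_sum_def sum_distrib_right
    by (intro sum.cong refl prod_list_map_intertwine s_u_minus_central b) (use assms in auto)
  then show ?thesis
    by (simp add: u_def algebra_simps)
qed

end

definition kseqs_from :: "nat \<Rightarrow> nat \<Rightarrow> nat \<Rightarrow> nat list set" where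
  "kseqs_from l k0 p = {ks. length ks = p \<and> sorted_wrt (<) (k0 # ks) \<and> set ks \<subseteq> {1..l}}"

definition chain_term ::
    "(nat \<Rightarrow> nat \<Rightarrow> 'a::ring_1) \<Rightarrow> (nat \<Rightarrow> nat \<Rightarrow> 'a) \<Rightarrow> nat \<Rightarrow> nat \<Rightarrow> nat \<Rightarrow> nat list \<Rightarrow> nat list \<Rightarrow> 'a"
  where
  "chain_term A S l i k0 ks js =
    (let kk = (\<lambda>r. (k0 # ks @ [l+1]) ! r); ii = (\<lambda>r. (i # js) ! r) in
      prod_list (map (\<lambda>r. prod_list (map (\<lambda>k. A (ii r) k) [kk r + 1..<kk (r+1)])) [0..<length ks+1])
      * prod_list (map (\<lambda>r. S (ii r) (ii (r+1))) (rev [0..<length ks])))"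

definition chain_sum ::
    "(nat \<Rightarrow> nat \<Rightarrow> 'a::ring_1) \<Rightarrow> (nat \<Rightarrow> nat \<Rightarrow> 'a) \<Rightarrow> nat \<Rightarrow> nat \<Rightarrow> nat \<Rightarrow> nat \<Rightarrow> nat \<Rightarrow> 'a"
  where
  "chain_sum A S l N i k0 p = (\<Sum>ks\<in>kseqs_from l k0 p. \<Sum>js\<in>iseqs N i p. chain_term A S l i k0 ks js)"

definition chain_series ::
    "(nat \<Rightarrow> nat \<Rightarrow> 'a::ring_1) \<Rightarrow> (nat \<Rightarrow> nat \<Rightarrow> 'a) \<Rightarrow> 'a \<Rightarrow> nat \<Rightarrow> nat \<Rightarrow> nat \<Rightarrow> nat \<Rightarrow> 'a"
  where
  "chain_series A S tt l N i k0 = (\<Sum>p = 0..l. tt ^ p * chain_sum A S l N i k0 p)"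

lemma chain_term_Nil: "chain_term A S l i k0 [] [] = prod_list (map (A i) [k0+1..<l+1])"
  by (simp add: chain_term_def)

lemma chain_term_Cons:
  assumes "length ks = length js"
  shows "chain_term A S l i k0 (k # ks) (j # js)
    = prod_list (map (A i) [k0+1..<k]) * chain_term A S l j k ks js * S i j"
proof -
  have "[0..<Suc n] = 0 # map Suc [0..<n]" for n
    by (simp add: map_Suc_upt upt_conv_Cons)
  then show ?thesis
    using assms unfolding chain_term_def Let_def
    by (simp add: o_def rev_map mult.assoc del: upt_Suc)
qed

lemma finite_kseqs_from: "finite (kseqs_from l k0 p)"
  by (rule finite_subset[OF _ finite_lists_length_eq[of "{1..l}" p]]) (auto simp: kseqs_from_def)

lemma finite_iseqs: "finite (iseqs N i p)"
  by (rule finite_subset[OF _ finite_lists_length_eq[of "{1..N}" p]]) (auto simp: iseqs_def)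

lemma kseqs_from_0: "kseqs_from l k0 0 = {[]}"
  by (auto simp: kseqs_from_def)

lemma iseqs_0: "iseqs N i 0 = {[]}"
  by (auto simp: iseqs_def)

lemma sorted_wrt_less_length_le:
  "sorted_wrt (<) (k0 # ks) \<Longrightarrow> set ks \<subseteq> {..l} \<Longrightarrow> ks \<noteq> [] \<Longrightarrow> k0 + length ks \<le> l"
proof (induction ks arbitrary: k0)
  case (Cons k ks)
  then show ?case by (cases ks) fastforce+
qed simp

lemma kseqs_from_eq_empty: "0 < p \<Longrightarrow> l < k0 + p \<Longrightarrow> kseqs_from l k0 p = {}"
  using sorted_wrt_less_length_le[of k0 _ l] by (fastforce simp: kseqs_from_def)

lemma kseqs_from_Suc:
  assumes "k0 < l"
  shows "kseqs_from l k0 (Suc q) = kseqs_from l (k0+1) (Suc q) \<union> Cons (k0+1) ` kseqs_from l (k0+1) q"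
proof (intro equalityI subsetI)
  fix ks assume "ks \<in> kseqs_from l k0 (Suc q)"
  then obtain k ks' where "ks = k # ks'" "length ks' = q" "sorted_wrt (<) (k0 # k # ks')"
      "set (k # ks') \<subseteq> {1..l}"
    by (auto simp: kseqs_from_def length_Suc_conv)
  then show "ks \<in> kseqs_from l (k0+1) (Suc q) \<union> Cons (k0+1) ` kseqs_from l (k0+1) q"
    by (cases "k = k0+1") (auto simp: kseqs_from_def)
next
  fix ks assume "ks \<in> kseqs_from l (k0+1) (Suc q) \<union> Cons (k0+1) ` kseqs_from l (k0+1) q"
  then show "ks \<in> kseqs_from l k0 (Suc q)"
    using assms by (auto simp: kseqs_from_def) (force simp: subset_iff)+
qed

lemma sum_kseqs_from_Suc:
  assumes "k0 < l"
  shows "(\<Sum>ks\<in>kseqs_from l k0 (Suc q). g ks)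
    = (\<Sum>ks\<in>kseqs_from l (k0+1) (Suc q). g ks) + (\<Sum>ks\<in>kseqs_from l (k0+1) q. g ((k0+1) # ks))"
proof -
  have "kseqs_from l (k0+1) (Suc q) \<inter> Cons (k0+1) ` kseqs_from l (k0+1) q = {}"
    by (auto simp: kseqs_from_def)
  then show ?thesis
    unfolding kseqs_from_Suc[OF assms]
    by (simp add: sum.union_disjoint finite_kseqs_from sum.reindex)
qed

lemma iseqs_Suc: "iseqs N i (Suc q) = (\<lambda>(j, js). j # js) ` (SIGMA j:{i+1..N}. iseqs N j q)"
proof (intro equalityI subsetI)
  fix x assume "x \<in> iseqs N i (Suc q)"
  then obtain j js where "x = j # js" "length js = q" "sorted_wrt (<) (i # j # js)"
      "set (j # js) \<subseteq> {1..N}"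
    by (auto simp: iseqs_def length_Suc_conv)
  then show "x \<in> (\<lambda>(j, js). j # js) ` (SIGMA j:{i+1..N}. iseqs N j q)"
    by (auto simp: iseqs_def image_iff)
next
  fix x assume "x \<in> (\<lambda>(j, js). j # js) ` (SIGMA j:{i+1..N}. iseqs N j q)"
  then show "x \<in> iseqs N i (Suc q)"
    by (fastforce simp: iseqs_def Suc_le_eq intro: less_trans)
qed

lemma sum_iseqs_Suc:
  "(\<Sum>js\<in>iseqs N i (Suc q). h js) = (\<Sum>j = i+1..N. \<Sum>js\<in>iseqs N j q. h (j # js))"
proof -
  have "inj_on (\<lambda>(j, js). j # js) (SIGMA j:{i+1..N}. iseqs N j q)"
    by (auto simp: inj_on_def)
  then show ?thesis
    unfolding iseqs_Suc by (simp add: sum.reindex sum.Sigma finite_iseqs split_def)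
qed

lemma chain_term_shift:
  assumes "k0 < l" "ks \<in> kseqs_from l (k0+1) p" "length js = p"
  shows "chain_term A S l i k0 ks js = A i (k0+1) * chain_term A S l i (k0+1) ks js"
proof (cases ks)
  case Nil
  then have "js = []" using assms by (auto simp: kseqs_from_def)
  then show ?thesis
    using Nil assms(1) by (simp add: chain_term_Nil upt_conv_Cons del: upt_Suc)
next
  case (Cons k ks')
  then obtain j js' where "js = j # js'" using assms by (cases js) (auto simp: kseqs_from_def)
  moreover have "k0 + 1 < k" using assms Cons by (auto simp: kseqs_from_def)
  ultimately show ?thesis
    using Cons assms by (simp add: chain_term_Cons kseqs_from_def upt_conv_Cons mult.assoc del: upt_Suc)
qed

lemma chain_sum_0:
  "k0 < l \<Longrightarrow> chain_sum A S l N i k0 0 = A i (k0+1) * chain_sum A S l N i (k0+1) 0"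
  by (simp add: chain_sum_def kseqs_from_0 iseqs_0 chain_term_Nil upt_conv_Cons del: upt_Suc)

text \<open>Either k_1 > k0+1, and the first factor A_i(k0+1) splits off, or k_1 = k0+1, and the first
  transposition s_{i i_1} splits off.\<close>
lemma chain_sum_Suc:
  assumes "k0 < l"
  shows "chain_sum A S l N i k0 (Suc q)
    = A i (k0+1) * chain_sum A S l N i (k0+1) (Suc q) + (\<Sum>j = i+1..N. chain_sum A S l N j (k0+1) q * S i j)"
proof -
  have first_A: "(\<Sum>ks\<in>kseqs_from l (k0+1) (Suc q). \<Sum>js\<in>iseqs N i (Suc q). chain_term A S l i k0 ks js)
      = A i (k0+1) * chain_sum A S l N i (k0+1) (Suc q)"
    unfolding chain_sum_def sum_distrib_left
    by (intro sum.cong refl chain_term_shift[OF assms]) (auto simp: iseqs_def)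
  have "(\<Sum>ks\<in>kseqs_from l (k0+1) q. \<Sum>js\<in>iseqs N i (Suc q). chain_term A S l i k0 ((k0+1) # ks) js)
      = (\<Sum>ks\<in>kseqs_from l (k0+1) q. \<Sum>j = i+1..N. \<Sum>js\<in>iseqs N j q. chain_term A S l j (k0+1) ks js * S i j)"
    unfolding sum_iseqs_Suc
    by (intro sum.cong refl) (auto simp: chain_term_Cons kseqs_from_def iseqs_def)
  also have "\<dots> = (\<Sum>j = i+1..N. chain_sum A S l N j (k0+1) q * S i j)"
    unfolding chain_sum_def sum_distrib_right by (subst sum.swap) simp
  finally show ?thesis
    unfolding chain_sum_def[of _ _ _ _ _ k0] sum_kseqs_from_Suc[OF assms] first_A by simp
qed

lemma chain_series_top: "chain_series A S tt l N i l = 1"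
proof -
  have "(\<Sum>p = Suc 0..l. tt ^ p * chain_sum A S l N i l p) = 0"
    by (rule sum.neutral) (auto simp: chain_sum_def kseqs_from_eq_empty)
  then show ?thesis
    unfolding chain_series_def
    by (simp add: sum.atLeast_Suc_atMost chain_sum_def kseqs_from_0 iseqs_0 chain_term_Nil)
qed

lemma chain_series_rec:
  assumes "k0 < l" and tt: "central tt"
  shows "chain_series A S tt l N i k0
    = A i (k0+1) * chain_series A S tt l N i (k0+1)
      + tt * (\<Sum>j = i+1..N. chain_series A S tt l N j (k0+1) * S i j)"
proof -
  let ?G = "chain_sum A S l N" and ?a = "A i (k0+1)"
  have split_0: "chain_series A S tt l N j k = ?G j k 0 + (\<Sum>q<l. tt ^ Suc q * ?G j k (Suc q))" for j k
    unfolding chain_series_def atLeast0AtMost lessThan_Suc_atMost[symmetric] sum.lessThan_Suc_shift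
    by simp
  have "?G j (k0+1) l = 0" for j
    using assms(1) by (simp add: chain_sum_def kseqs_from_eq_empty)
  then have drop_top: "chain_series A S tt l N j (k0+1) = (\<Sum>q<l. tt ^ q * ?G j (k0+1) q)" for j
    unfolding chain_series_def atLeast0AtMost lessThan_Suc_atMost[symmetric] by simp
  have "chain_series A S tt l N i k0 = ?a * ?G i (k0+1) 0
      + (\<Sum>q<l. ?a * (tt ^ Suc q * ?G i (k0+1) (Suc q))
                + (\<Sum>j = i+1..N. tt ^ Suc q * (?G j (k0+1) q * S i j)))"
    unfolding split_0 chain_sum_0[OF assms(1)] chain_sum_Suc[OF assms(1)]
    by (simp add: distrib_left sum_distrib_left mult.assoc
        central_left_commute[OF central_power[OF tt]] del: power_Suc)
  also have "\<dots> = ?a * chain_series A S tt l N i (k0+1)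
      + tt * (\<Sum>j = i+1..N. chain_series A S tt l N j (k0+1) * S i j)"
  proof -
    have "?a * ?G i (k0+1) 0 + (\<Sum>q<l. ?a * (tt ^ Suc q * ?G i (k0+1) (Suc q)))
        = ?a * chain_series A S tt l N i (k0+1)"
      by (simp add: split_0 distrib_left sum_distrib_left)
    moreover have "(\<Sum>q<l. \<Sum>j = i+1..N. tt ^ Suc q * (?G j (k0+1) q * S i j))
        = tt * (\<Sum>j = i+1..N. chain_series A S tt l N j (k0+1) * S i j)"
      unfolding drop_top by (simp add: sum_distrib_left sum_distrib_right mult.assoc sum.swap[of _ "{..<l}"])
    ultimately show ?thesis
      by (simp only: sum.distrib add.assoc[symmetric])
  qed
  finally show ?thesis .
qed

lemma chain_series_unique:
  fixes F :: "nat \<Rightarrow> nat \<Rightarrow> 'a::ring_1"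
  assumes tt: "central tt"
    and top: "\<And>i. i \<in> {1..N} \<Longrightarrow> F i l = 1"
    and rec: "\<And>i k0. i \<in> {1..N} \<Longrightarrow> k0 < l \<Longrightarrow>
      F i k0 = A i (k0+1) * F i (k0+1) + tt * (\<Sum>j = i+1..N. F j (k0+1) * S i j)"
    and "k0 \<le> l" "i \<in> {1..N}"
  shows "F i k0 = chain_series A S tt l N i k0"
  using assms(4,5)
proof (induction k0 arbitrary: i rule: inc_induct)
  case base
  then show ?case by (simp add: top chain_series_top)
next
  case (step k0)
  have "F j (k0+1) = chain_series A S tt l N j (k0+1)" if "j \<in> {i+1..N}" for j
    using step.IH that step.prems by simp
  then show ?case
    using step by (simp add: rec chain_series_rec[OF _ tt])
qed

lemma chain_series_at_0:
  "chain_series A S tt l N i 0 =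
    (\<Sum>p = 0..l. tt ^ p *
      (\<Sum>ks\<in>kseqs l p. \<Sum>js\<in>iseqs N i p.
        (let kk = (\<lambda>r. (0 # ks @ [l+1]) ! r); ii = (\<lambda>r. (i # js) ! r) in
          prod_list (map (\<lambda>r. prod_list (map (\<lambda>k. A (ii r) k) [kk r + 1..<kk (r+1)])) [0..<p+1])
          * prod_list (map (\<lambda>r. S (ii r) (ii (r+1))) (rev [0..<p])))))"
proof -
  have "kseqs l p = kseqs_from l 0 p" for p
    by (simp add: kseqs_def kseqs_from_def)
  then show ?thesis
    unfolding chain_series_def chain_sum_def
    by (intro sum.cong refl arg_cong2[where f = "(*)"]) (auto simp: chain_term_def kseqs_from_def)
qed

lemma central_zk:
  assumes "\<And>a. central (emb a)" "central hb" "\<And>m. central (c m)"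
  shows "central (zk emb hb c eps l k)"
  unfolding zk_def
  by (intro central_minus central_mult central_add central_sum central_of_nat assms)

theorem lemma5p4:
  fixes emb :: "complex \<Rightarrow> 'a::ring_1"
    and hb tt :: 'a and c :: "nat \<Rightarrow> 'a"
    and T :: "(nat \<Rightarrow> nat) \<Rightarrow> 'a"
    and w X Xinv :: "nat \<Rightarrow> 'a"
    and N l i :: nat and eps :: complex
  assumes l: "l \<ge> 1"
    and eps_root: "eps ^ l = 1" and eps_prim: "\<And>m. 0 < m \<Longrightarrow> m < l \<Longrightarrow> eps ^ m \<noteq> 1"
    \<comment> \<open>emb: complex scalars, a ring homomorphism into the centre\<close>
    and emb_add: "\<And>a b. emb (a + b) = emb a + emb b"
    and emb_mult: "\<And>a b. emb (a * b) = emb a * emb b"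
    and emb_one: "emb 1 = 1"
    and emb_central: "\<And>a x. emb a * x = x * emb a"
    \<comment> \<open>hbar, t, c_m are central scalars\<close>
    and hb_central: "\<And>x. hb * x = x * hb"
    and tt_central: "\<And>x. tt * x = x * tt"
    and c_central: "\<And>m x. c m * x = x * c m"
    \<comment> \<open>the symmetric group S_N (permutations of {1..N}) acting through T\<close>
    and T_id: "T id = 1"
    and T_comp: "\<And>\<sigma> \<tau>. \<sigma> permutes {1..N} \<Longrightarrow> \<tau> permutes {1..N} \<Longrightarrow> T (\<sigma> \<circ> \<tau>) = T \<sigma> * T \<tau>"
    \<comment> \<open>relations among the w's and the X's\<close>
    and w_comm: "\<And>a b. a \<in> {1..N} \<Longrightarrow> b \<in> {1..N} \<Longrightarrow> w a * w b = w b * w a"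
    and X_comm: "\<And>a b. a \<in> {1..N} \<Longrightarrow> b \<in> {1..N} \<Longrightarrow> X a * X b = X b * X a"
    and X_inv1: "\<And>a. a \<in> {1..N} \<Longrightarrow> X a * Xinv a = 1"
    and X_inv2: "\<And>a. a \<in> {1..N} \<Longrightarrow> Xinv a * X a = 1"
    \<comment> \<open>s_a w relations, with s_a = T (transpose a (a+1))\<close>
    and sw1: "\<And>a. 1 \<le> a \<Longrightarrow> a < N \<Longrightarrow> T (transpose a (a+1)) * w a = w (a+1) * T (transpose a (a+1)) - tt"
    and sw2: "\<And>a. 1 \<le> a \<Longrightarrow> a < N \<Longrightarrow> T (transpose a (a+1)) * w (a+1) = w a * T (transpose a (a+1)) + tt"
    and sw3: "\<And>a b. 1 \<le> a \<Longrightarrow> a < N \<Longrightarrow> b \<in> {1..N} \<Longrightarrow> b \<noteq> a \<Longrightarrow> b \<noteq> a + 1 \<Longrightarrow>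
                T (transpose a (a+1)) * w b = w b * T (transpose a (a+1))"
    \<comment> \<open>sigma X_a^(+-1) = X_(sigma a)^(+-1) sigma\<close>
    and sX1: "\<And>\<sigma> a. \<sigma> permutes {1..N} \<Longrightarrow> a \<in> {1..N} \<Longrightarrow> T \<sigma> * X a = X (\<sigma> a) * T \<sigma>"
    and sX2: "\<And>\<sigma> a. \<sigma> permutes {1..N} \<Longrightarrow> a \<in> {1..N} \<Longrightarrow> T \<sigma> * Xinv a = Xinv (\<sigma> a) * T \<sigma>"
    \<comment> \<open>commutators [w_a, X_b]\<close>
    and wX1: "\<And>a b. a \<in> {1..N} \<Longrightarrow> b \<in> {1..N} \<Longrightarrow> a > b \<Longrightarrow>
                w a * X b - X b * w a = - (tt * X b * T (transpose b a))"
    and wX2: "\<And>a b. a \<in> {1..N} \<Longrightarrow> b \<in> {1..N} \<Longrightarrow> a < b \<Longrightarrow>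
                w a * X b - X b * w a = - (tt * X a * T (transpose a b))"
    and wX3: "\<And>a. a \<in> {1..N} \<Longrightarrow>
                w a * X a - X a * w a = - (hb * X a)
                  + tt * (\<Sum>k = 1..<a. X k * T (transpose k a))
                  + tt * (\<Sum>k = a+1..N. X a * T (transpose a k))"
    and i: "i \<in> {1..N}"
  shows "prod_list (map (\<lambda>k. w i - hb - zk emb hb c eps l k
                               + tt * (\<Sum>j = i+1..N. T (transpose i j))) [1..<l+1])
       = (\<Sum>p = 0..l. tt ^ p *
            (\<Sum>ks\<in>kseqs l p. \<Sum>js\<in>iseqs N i p.
               (let kk = (\<lambda>r. (0 # ks @ [l+1]) ! r); ii = (\<lambda>r. (i # js) ! r) in
                 prod_list (map (\<lambda>r. prod_list (map (\<lambda>k. w (ii r) - hb - zk emb hb c eps l k)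
                                                     [kk r + 1..<kk (r+1)])) [0..<p+1])
                 * prod_list (map (\<lambda>r. T (transpose (ii r) (ii (r+1)))) (rev [0..<p])))))"
proof -
  interpret degenerate_affine_hecke T w tt N
    using T_id T_comp sw1 sw2 sw3 tt_central by unfold_locales (simp_all add: central_def)
  define b where "b k = hb + zk emb hb c eps l k" for k
  define A where "A j k = w j - hb - zk emb hb c eps l k" for j k
  define F where "F j k0 = prod_list (map (\<lambda>k. u j - b k) [k0+1..<l+1])" for j k0
  have tt: "central tt" and hb: "central hb" and emb: "central (emb a)" and c: "central (c m)" for a m
    using tt_central hb_central emb_central c_central by (simp_all add: central_def)
  have b: "central (b k)" for k
    unfolding b_def by (intro central_add hb central_zk emb c)
  have rec: "F j k0 = A j (k0+1) * F j (k0+1) + tt * (\<Sum>j' = j+1..N. F j' (k0+1) * s j j')"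
    if "j \<in> {1..N}" "k0 < l" for j k0
    using prod_u_minus_Cons[OF that(1) b] that(2)
    by (simp add: F_def A_def b_def upt_conv_Cons diff_diff_eq del: upt_Suc)
  have "prod_list (map (\<lambda>k. w i - hb - zk emb hb c eps l k + tt * (\<Sum>j = i+1..N. T (transpose i j))) [1..<l+1])
      = F i 0"
    by (simp add: F_def u_def upper_transp_sum_def s_def b_def algebra_simps)
  also have "\<dots> = chain_series A s tt l N i 0"
    using i by (intro chain_series_unique[where F = F, OF tt _ rec]) (simp_all add: F_def)
  finally show ?thesis
    by (simp add: chain_series_at_0 A_def s_def [abs_def])
qed

end
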